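(* Let $m,n,P$ be positive integers with $P \ge mn+n-1$, let $N_1,N_0$ be positive integers with $m \mid N_1$ and $n \mid N_0$, and let $\bm{W} \in \mathbb{R}^{N_1 \times N_0}$ and $\bm{x} \in \mathbb{R}^{N_0}$. Consider the Generalized PolyDot scheme for computing $\bm{s}=\bm{W}\bm{x}$ with $P$ nodes defined in the context. Then the recovery threshold of this scheme is $mn+n-1$: from the computed outputs $\widetilde{\bm{s}}_p$ of any $mn+n-1$ of the $P$ nodes, the whole product $\bm{s}=\bm{W}\bm{x}$ can be recovered. Consequently, the scheme tolerates up to $P-mn-n+1$ erasures (nodes whose outputs are missing).
   Context: Block-partition $\bm{W}$ into an $m\times n$ grid of blocks $\bm{W}_{i,j}\in\mathbb{R}^{(N_1/m)\times(N_0/n)}$ ($i=0,\dots,m-1$, $j=0,\dots,n-1$), and partition $\bm{x}$ into $n$ consecutive sub-vectors $\bm{x}_j \in \mathbb{R}^{N_0/n}$; correspondingly $\bm{s}=\bm{W}\bm{x}$ splits into $m$ sub-vectors $\bm{s}_i=\sum_{j}\bm{W}_{i,j}\bm{x}_j$. Define the polynomials $\widetilde{\bm{W}}(u,v)=\sum_{i=0}^{m-1}\sum_{j=0}^{n-1}\bm{W}_{i,j}u^i v^j$ and $\widetilde{\bm{x}}(v)=\sum_{j=0}^{n-1}\bm{x}_j v^{n-1-j}$. Choose $P$ distinct real numbers $b_0,\dots,b_{P-1}$ and set $a_p=b_p^{\,n}$. Node $p$ ($p=0,\dots,P-1$) stores only $\widetilde{\bm{W}}(a_p,b_p)$ (an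 $\frac{N_1}{m}\times\frac{N_0}{n}$ matrix) and $\widetilde{\bm{x}}(b_p)$ (an $\frac{N_0}{n}$-vector) and computes $\widetilde{\bm{s}}_p=\widetilde{\bm{W}}(a_p,b_p)\widetilde{\bm{x}}(b_p)$. The recovery threshold is the number of node outputs, out of $P$, that a decoder needs (from any subset of nodes of that size) to recover $\bm{s}$. *)

theory Defs
  imports Complex_Main
begin

text \<open>Matrices are functions nat => nat => real (row, column), vectors nat => real;
  only indices within the stated dimensions are meaningful.\<close>

definition mat_vec :: "nat \<Rightarrow> nat \<Rightarrow> (nat \<Rightarrow> nat \<Rightarrow> real) \<Rightarrow> (nat \<Rightarrow> real) \<Rightarrow> (nat \<Rightarrow> real)" where
  "mat_vec R C A v = (\<lambda>r. if r < R then (\<Sum>c<C. A r c * v c) else 0)"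

definition block :: "nat \<Rightarrow> nat \<Rightarrow> nat \<Rightarrow> nat \<Rightarrow> (nat \<Rightarrow> nat \<Rightarrow> real) \<Rightarrow> nat \<Rightarrow> nat \<Rightarrow> (nat \<Rightarrow> nat \<Rightarrow> real)" where
  "block N1 N0 m n W i j = (\<lambda>r c. W (i * (N1 div m) + r) (j * (N0 div n) + c))"

definition subvec :: "nat \<Rightarrow> nat \<Rightarrow> (nat \<Rightarrow> real) \<Rightarrow> nat \<Rightarrow> (nat \<Rightarrow> real)" where
  "subvec N0 n x j = (\<lambda>c. x (j * (N0 div n) + c))"

definition W_tilde :: "nat \<Rightarrow> nat \<Rightarrow> nat \<Rightarrow> nat \<Rightarrow> (nat \<Rightarrow> nat \<Rightarrow> real) \<Rightarrow> real \<Rightarrow> real \<Rightarrow> (nat \<Rightarrow> nat \<Rightarrow> real)" where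
  "W_tilde N1 N0 m n W u v = (\<lambda>r c. \<Sum>i<m. \<Sum>j<n. block N1 N0 m n W i j r c * u ^ i * v ^ j)"

definition x_tilde :: "nat \<Rightarrow> nat \<Rightarrow> (nat \<Rightarrow> real) \<Rightarrow> real \<Rightarrow> (nat \<Rightarrow> real)" where
  "x_tilde N0 n x v = (\<lambda>c. \<Sum>j<n. subvec N0 n x j c * v ^ (n - 1 - j))"

definition node_output :: "nat \<Rightarrow> nat \<Rightarrow> nat \<Rightarrow> nat \<Rightarrow> (nat \<Rightarrow> real) \<Rightarrow> (nat \<Rightarrow> nat \<Rightarrow> real) \<Rightarrow> (nat \<Rightarrow> real) \<Rightarrow> nat \<Rightarrow> (nat \<Rightarrow> real)" where
  "node_output N1 N0 m n b W x p =
     mat_vec (N1 div m) (N0 div n) (W_tilde N1 N0 m n W ((b p) ^ n) (b p)) (x_tilde N0 n x (b p))"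

end

theory Submission
  imports Defs "HOL-Computational_Algebra.Polynomial"
begin

text \<open>Row r of the output of node p is the value at v = b p of the polynomial
  W~(v^n, v) x~(v) = \<Sum>i j k. (W_{i,j} x_k)_r v^(n i + j + n - 1 - k), of degree at most
  m n + n - 2. The exponent n i + n - 1 arises exactly from the terms with j = k, so its
  coefficient is (s_i)_r = (\<Sum>j. W_{i,j} x_j)_r. Since the points b p are distinct, any
  m n + n - 1 outputs determine this polynomial, hence every block s_i.\<close>

definition polydot_poly :: "nat \<Rightarrow> nat \<Rightarrow> (nat \<Rightarrow> nat \<Rightarrow> nat \<Rightarrow> 'a::comm_monoid_add) \<Rightarrow> 'a poly" where
  "polydot_poly m n a = (\<Sum>i<m. \<Sum>j<n. \<Sum>k<n. monom (a i j k) (n * i + j + (n - 1 - k)))"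

lemma polydot_exponent_eq_iff:
  fixes n i i' j k :: nat
  assumes "j < n" "k < n"
  shows "n * i' + j + (n - 1 - k) = n * i + (n - 1) \<longleftrightarrow> i' = i \<and> j = k"
proof -
  have "n * i' + j + (n - 1 - k) = n * i + (n - 1) \<longleftrightarrow> n * i' + j = n * i + k"
    using assms by linarith
  also have "\<dots> \<longleftrightarrow> i' = i \<and> j = k"
  proof
    assume eq: "n * i' + j = n * i + k"
    have "i' = (n * i' + j) div n" "i = (n * i + k) div n"
      using assms by simp_all
    with eq have "i' = i" by simp
    with eq show "i' = i \<and> j = k" by simp
  qed simp
  finally show ?thesis .
qed

lemma coeff_polydot_poly:
  assumes "i < m"
  shows "coeff (polydot_poly m n a) (n * i + (n - 1)) = (\<Sum>j<n. a i j j)"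
proof -
  have "coeff (polydot_poly m n a) (n * i + (n - 1))
      = (\<Sum>i'<m. \<Sum>j<n. \<Sum>k<n. if i' = i \<and> j = k then a i' j k else 0)"
    unfolding polydot_poly_def coeff_sum coeff_monom
    by (intro sum.cong refl) (use polydot_exponent_eq_iff in \<open>auto simp: eq_commute\<close>)
  also have "\<dots> = (\<Sum>i'<m. if i' = i then (\<Sum>j<n. a i' j j) else 0)"
    by (intro sum.cong refl) (simp add: if_distrib sum.delta' cong: if_cong)
  also have "\<dots> = (\<Sum>j<n. a i j j)"
    using assms by simp
  finally show ?thesis .
qed

lemma degree_polydot_poly: "degree (polydot_poly m n a) \<le> m * n + n - 2"
  unfolding polydot_poly_def
proof (intro degree_sum_le finite_lessThan)
  fix i j k assume "i \<in> {..<m}" "j \<in> {..<n}" "k \<in> {..<n}"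
  then have i: "Suc i \<le> m" and j: "Suc j \<le> n"
    by simp_all
  from i have "n * Suc i \<le> n * m"
    by (rule mult_le_mono2)
  with j have "n * i + j + (n - 1 - k) \<le> m * n + n - 2"
    by (simp add: algebra_simps)
  then show "degree (monom (a i j k) (n * i + j + (n - 1 - k))) \<le> m * n + n - 2"
    using degree_monom_le order_trans by blast
qed

lemma poly_polydot_poly:
  fixes a :: "nat \<Rightarrow> nat \<Rightarrow> nat \<Rightarrow> 'a::comm_semiring_1"
  shows "poly (polydot_poly m n a) v = (\<Sum>i<m. \<Sum>j<n. \<Sum>k<n. a i j k * (v ^ n) ^ i * v ^ j * v ^ (n - 1 - k))"
  unfolding polydot_poly_def poly_sum poly_monom power_add power_mult by (simp add: mult.assoc)

lemma sum_lessThan_mult_blocks: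
  fixes f :: "nat \<Rightarrow> 'a::comm_monoid_add"
  shows "(\<Sum>c<n * d. f c) = (\<Sum>j<n. \<Sum>c<d. f (j * d + c))"
proof -
  have "(\<Sum>c\<in>{j * d..<j * d + d}. f c) = (\<Sum>c<d. f (j * d + c))" for j
    using sum.shift_bounds_nat_ivl[of f 0 "j * d" d] by (simp add: add.commute atLeast0LessThan)
  then show ?thesis
    by (simp flip: sum.nat_group)
qed

lemma mat_vec_block_row:
  assumes "m dvd N1" "n dvd N0" "i < m" "r < N1 div m"
  shows "mat_vec N1 N0 W x (i * (N1 div m) + r)
       = (\<Sum>j<n. mat_vec (N1 div m) (N0 div n) (block N1 N0 m n W i j) (subvec N0 n x j) r)"
proof -
  define d1 d0 where "d1 = N1 div m" and "d0 = N0 div n"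
  have N1: "N1 = m * d1" and N0: "N0 = n * d0"
    using assms(1,2) by (simp_all add: d1_def d0_def)
  have r: "r < d1"
    using assms(4) by (simp add: d1_def)
  have "i * d1 + r < Suc i * d1"
    using r by simp
  also have "\<dots> \<le> m * d1"
    using assms(3) by (intro mult_le_mono1) simp
  finally have "i * d1 + r < N1"
    by (simp add: N1)
  with r show ?thesis
    by (simp add: mat_vec_def block_def subvec_def N0 sum_lessThan_mult_blocks
        flip: d1_def d0_def)
qed

definition node_output_poly :: "nat \<Rightarrow> nat \<Rightarrow> nat \<Rightarrow> nat \<Rightarrow> (nat \<Rightarrow> nat \<Rightarrow> real) \<Rightarrow> (nat \<Rightarrow> real) \<Rightarrow> nat \<Rightarrow> real poly" where
  "node_output_poly N1 N0 m n W x r = polydot_poly m n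
     (\<lambda>i j k. mat_vec (N1 div m) (N0 div n) (block N1 N0 m n W i j) (subvec N0 n x k) r)"

lemma node_output_eq_poly:
  assumes "r < N1 div m"
  shows "node_output N1 N0 m n b W x p r = poly (node_output_poly N1 N0 m n W x r) (b p)"
proof -
  define v where "v = b p"
  let ?B = "block N1 N0 m n W" and ?X = "subvec N0 n x" and ?d0 = "N0 div n"
  have "node_output N1 N0 m n b W x p r
      = (\<Sum>c<?d0. \<Sum>i<m. \<Sum>j<n. \<Sum>k<n. ?B i j r c * ?X k c * ((v ^ n) ^ i * v ^ j * v ^ (n - 1 - k)))"
    using assms
    by (simp add: node_output_def mat_vec_def W_tilde_def x_tilde_def v_def
        sum_distrib_left sum_distrib_right mult_ac)
  also have "\<dots> = (\<Sum>i<m. \<Sum>j<n. \<Sum>k<n. (\<Sum>c<?d0. ?B i j r c * ?X k c) * ((v ^ n) ^ i * v ^ j * v ^ (n - 1 - k)))"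
    by (simp add: sum_distrib_right sum.swap[where A = "{..<?d0}"])
  also have "\<dots> = poly (node_output_poly N1 N0 m n W x r) v"
    using assms by (simp add: node_output_poly_def poly_polydot_poly mat_vec_def mult.assoc)
  finally show ?thesis
    by (simp add: v_def)
qed

lemma coeff_node_output_poly:
  assumes "m dvd N1" "n dvd N0" "i < m" "r < N1 div m"
  shows "coeff (node_output_poly N1 N0 m n W x r) (n * i + (n - 1)) = mat_vec N1 N0 W x (i * (N1 div m) + r)"
  using assms by (simp only: node_output_poly_def coeff_polydot_poly mat_vec_block_row)

lemma degree_node_output_poly:
  assumes "0 < m" "0 < n"
  shows "degree (node_output_poly N1 N0 m n W x r) < m * n + n - 1"
proof -
  have "degree (node_output_poly N1 N0 m n W x r) \<le> m * n + n - 2"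
    unfolding node_output_poly_def by (rule degree_polydot_poly)
  moreover have "n \<le> m * n"
    using assms(1) by simp
  ultimately show ?thesis
    using assms(2) by linarith
qed

lemma node_outputs_determine_mat_vec:
  assumes "0 < m" "0 < n" "m dvd N1" "n dvd N0" "inj_on b S" "finite S" "m * n + n - 1 \<le> card S"
    and same_outputs: "\<And>p. p \<in> S \<Longrightarrow> node_output N1 N0 m n b W x p = node_output N1 N0 m n b W' x' p"
  shows "mat_vec N1 N0 W x = mat_vec N1 N0 W' x'"
proof
  fix R
  show "mat_vec N1 N0 W x R = mat_vec N1 N0 W' x' R"
  proof (cases "R < N1")
    case False
    then show ?thesis by (simp add: mat_vec_def)
  next
    case True
    define d1 where "d1 = N1 div m"
    define i r where "i = R div d1" and "r = R mod d1"
    have N1: "N1 = m * d1"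
      using assms(3) by (simp add: d1_def)
    with True have "0 < d1"
      by (cases d1) auto
    with True N1 have R: "R = i * d1 + r" and "i < m" and r: "r < d1"
      by (simp_all add: i_def r_def div_less_iff_less_mult)
    have "node_output_poly N1 N0 m n W x r = node_output_poly N1 N0 m n W' x' r"
    proof (rule poly_eqI_degree[where A = "b ` S"])
      fix y assume "y \<in> b ` S"
      then obtain p where "p \<in> S" "y = b p"
        by blast
      with same_outputs r show "poly (node_output_poly N1 N0 m n W x r) y = poly (node_output_poly N1 N0 m n W' x' r) y"
        by (simp add: d1_def flip: node_output_eq_poly)
    next
      have "card (b ` S) = card S"
        using assms(5) by (rule card_image)
      then show "degree (node_output_poly N1 N0 m n W x r) < card (b ` S)"
        and "degree (node_output_poly N1 N0 m n W' x' r) < card (b ` S)"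
        using degree_node_output_poly[OF assms(1,2)] assms(7) by (metis order_less_le_trans)+
    qed
    with assms(3,4) \<open>i < m\<close> r show ?thesis
      by (metis R d1_def coeff_node_output_poly)
  qed
qed

lemma ex_decoder_if_determined:
  assumes "\<And>a a'. f a = f a' \<Longrightarrow> g a = g a'"
  shows "\<exists>dec. \<forall>a. dec (f a) = g a"
proof (intro exI allI)
  fix a
  have "f (SOME a'. f a' = f a) = f a"
    by (rule someI) (rule refl)
  then show "g (SOME a'. f a' = f a) = g a"
    by (rule assms)
qed

theorem theorem1:
  fixes m n P N1 N0 :: nat and b :: "nat \<Rightarrow> real" and S :: "nat set"
  assumes "0 < m" "0 < n" "0 < P" "0 < N1" "0 < N0"
    and "P \<ge> m * n + n - 1"
    and "m dvd N1" "n dvd N0"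
    and "inj_on b {..<P}"
    and "S \<subseteq> {..<P}" "card S \<ge> m * n + n - 1"
  shows "\<exists>dec :: (nat \<Rightarrow> nat \<Rightarrow> real) \<Rightarrow> (nat \<Rightarrow> real).
           \<forall>(W :: nat \<Rightarrow> nat \<Rightarrow> real) (x :: nat \<Rightarrow> real).
             dec (\<lambda>p. if p \<in> S then node_output N1 N0 m n b W x p else (\<lambda>_. 0))
               = mat_vec N1 N0 W x"
proof -
  define outputs where
    "outputs W x = (\<lambda>p. if p \<in> S then node_output N1 N0 m n b W x p else (\<lambda>_. 0))" for W x
  have "finite S" "inj_on b S"
    using assms(9,10) by (auto intro: finite_subset inj_on_subset)
  have determined: "mat_vec N1 N0 W x = mat_vec N1 N0 W' x'"
    if "outputs W x = outputs W' x'" for W x W' x'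
  proof (rule node_outputs_determine_mat_vec[OF assms(1,2,7,8) \<open>inj_on b S\<close> \<open>finite S\<close> assms(11)])
    show "node_output N1 N0 m n b W x p = node_output N1 N0 m n b W' x' p" if "p \<in> S" for p
      using fun_cong[OF \<open>outputs W x = outputs W' x'\<close>, of p] that by (simp add: outputs_def)
  qed
  have "\<exists>dec. \<forall>a. dec (case_prod outputs a) = case_prod (mat_vec N1 N0) a"
    by (rule ex_decoder_if_determined) (auto intro: determined)
  then show ?thesis
    by (simp add: outputs_def)
qed

end
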